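(* Let $S=\{1,\ldots,n\}$, let $\boldsymbol{P}(S)$ be the set of partitions of $S$, and let $\varrho(\mathcal{C})\ge0$ for $\mathcal{C}\in\boldsymbol{P}(S)$. Let $(\Sigma_t)_{t\ge0}$ be the partitioning process, i.e. the continuous-time Markov chain on $\boldsymbol{P}(S)$ with rate matrix $Q$ given as follows: for $\mathcal{B}\ne\mathcal{A}$, $Q(\mathcal{A},\mathcal{B})=\varrho^{A}_{\mathcal{B}_A}$ if $\mathcal{B}=(\mathcal{A}\setminus\{A\})\cup\mathcal{B}_A$ for some block $A\in\mathcal{A}$ and some partition $\mathcal{B}_A\ne\{A\}$ of $A$, and $Q(\mathcal{A},\mathcal{B})=0$ otherwise; and $Q(\mathcal{A},\mathcal{A})=-\sum_{\mathcal{C}\ne\mathcal{A}}Q(\mathcal{A},\mathcal{C})$. Here $\varrho^{A}_{\mathcal{B}_A}=\sum_{\mathcal{C}\in\boldsymbol{P}(S):\,\mathcal{C}|_A=\mathcal{B}_A}\varrho(\mathcal{C})$. Define $N:\mathbb{R}^{\boldsymbol{P}(S)}\to\mathbb{R}$ by $N(p)=\sum_{\mathcal{A}\in\boldsymbol{P}(S)}p(\mathcal{A})|\mathcal{A}|$. Then the law $p_t$ of $\Sigma_t$, which satisfies $\dot p_t=\sum_{\mathcal{A},\mathcal{B}}p_t(\mathcal{A})Q(\mathcal{A},\mathcal{B})(\mathcal{B}-\mathcal{A})$, satisfies a generalised gradient system with respect to $N$: $\dot p_t=K(p_t)\nabla N(p_t)$, where $K$ takes values in the symmetric positive semi-definite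 matrices, is continuous on the set of probability vectors on $\boldsymbol{P}(S)$ and smooth on its interior.
   Context: $|\mathcal{A}|$ is the number of blocks of $\mathcal{A}$. For a partition $\mathcal{C}$ of $S$ and $U\subseteq S$, $\mathcal{C}|_U=\{C\cap U: C\in\mathcal{C}\}\setminus\{\varnothing\}$ is the induced partition of $U$. Vectors in $\mathbb{R}^{\boldsymbol{P}(S)}$ are formal sums $\sum p(\mathcal{A})\mathcal{A}$ with each partition identified with a standard basis vector; $\nabla$ is the Euclidean gradient. *)

theory Defs
  imports "HOL-Analysis.Analysis" "HOL-Library.Disjoint_Sets"
begin

text \<open>The ground set S is the universe of a finite type 'n (so n = CARD('n)).
  Partitions of S form a (finite) type.\<close>

typedef 'a partition = "{P :: 'a set set. partition_on UNIV P}"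
proof
  show "{UNIV} \<in> {P :: 'a set set. partition_on UNIV P}"
    by (simp add: partition_on_def disjoint_def)
qed

instance partition :: (finite) finite
proof
  have "(UNIV :: 'a partition set) = Abs_partition ` {P :: 'a set set. partition_on UNIV P}"
    using type_definition.Abs_image[OF type_definition_partition] by (simp add: eq_commute)
  then show "finite (UNIV :: 'a partition set)" by (metis finite_imageI finite)
qed

abbreviation blocks :: "'a partition \<Rightarrow> 'a set set" where
  "blocks \<A> \<equiv> Rep_partition \<A>"

definition induced :: "'a set set \<Rightarrow> 'a set \<Rightarrow> 'a set set" where
  "induced \<C> U = ((\<lambda>C. C \<inter> U) ` \<C>) - {{}}"

definition rho_up :: "('a::finite partition \<Rightarrow> real) \<Rightarrow> 'a set \<Rightarrow> 'a set set \<Rightarrow> real" where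
  "rho_up \<rho> A BA = (\<Sum>\<C>\<in>{\<C>. induced (blocks \<C>) A = BA}. \<rho> \<C>)"

text \<open>Such a pair is unique if it exists; we sum over all of them.\<close>
definition splits :: "'a partition \<Rightarrow> 'a partition \<Rightarrow> ('a set \<times> 'a set set) set" where
  "splits \<A> \<B> = {(A, BA). A \<in> blocks \<A> \<and> partition_on A BA \<and> BA \<noteq> {A} \<and>
                     blocks \<B> = (blocks \<A> - {A}) \<union> BA}"

definition Qoff :: "('a::finite partition \<Rightarrow> real) \<Rightarrow> 'a partition \<Rightarrow> 'a partition \<Rightarrow> real" where
  "Qoff \<rho> \<A> \<B> = (if \<B> = \<A> then 0 else (\<Sum>(A, BA)\<in>splits \<A> \<B>. rho_up \<rho> A BA))"

definition Qrate :: "('a::finite partition \<Rightarrow> real) \<Rightarrow> 'a partition \<Rightarrow> 'a partition \<Rightarrow> real" where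
  "Qrate \<rho> \<A> \<B> = (if \<B> = \<A> then - (\<Sum>\<C>\<in>UNIV - {\<A>}. Qoff \<rho> \<A> \<C>) else Qoff \<rho> \<A> \<B>)"

definition master_rhs :: "('a::finite partition \<Rightarrow> real) \<Rightarrow> real ^ 'a partition \<Rightarrow> real ^ 'a partition" where
  "master_rhs \<rho> p = (\<Sum>\<A>\<in>UNIV. \<Sum>\<B>\<in>UNIV. (p $ \<A> * Qrate \<rho> \<A> \<B>) *\<^sub>R (axis \<B> 1 - axis \<A> 1))"

definition Nfun :: "real ^ 'a::finite partition \<Rightarrow> real" where
  "Nfun p = (\<Sum>\<A>\<in>UNIV. p $ \<A> * real (card (blocks \<A>)))"

definition prob_simplex :: "(real ^ 'a::finite partition) set" where
  "prob_simplex = {p. (\<forall>\<A>. 0 \<le> p $ \<A>) \<and> (\<Sum>\<A>\<in>UNIV. p $ \<A>) = 1}"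

fun Ck_on :: "nat \<Rightarrow> 'a::real_normed_vector set \<Rightarrow> ('a \<Rightarrow> 'b::real_normed_vector) \<Rightarrow> bool" where
  "Ck_on 0 U f = continuous_on U f"
| "Ck_on (Suc k) U f = (\<exists>f'. (\<forall>x\<in>U. (f has_derivative f' x) (at x)) \<and>
                              (\<forall>h. Ck_on k U (\<lambda>x. f' x h)))"

definition smooth_on :: "'a::real_normed_vector set \<Rightarrow> ('a \<Rightarrow> 'b::real_normed_vector) \<Rightarrow> bool" where
  "smooth_on U f = (\<forall>k. Ck_on k U f)"

end

theory Submission
  imports Defs
begin

text \<open>Every jump \<A> \<rightarrow> \<B> of the partitioning process splits one block of \<A>, so it
  strictly increases the number of blocks. The gradient of N is the block-count vector c, and
  (\<B> - \<A>) \<bullet> c = |\<B>| - |\<A>| > 0 along every jump. Hence the Onsager matrix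
  K(p) = \<Sum> p(\<A>) Q(\<A>,\<B>) / (|\<B>| - |\<A>|) (\<B> - \<A>) (\<B> - \<A>)^T
  satisfies K(p) c = \<Sum> p(\<A>) Q(\<A>,\<B>) (\<B> - \<A>), the right-hand side of the forward equation.
  As a nonnegative combination of rank-one matrices d d^T it is symmetric positive
  semi-definite on probability vectors, and it is linear in p, hence continuous and smooth.\<close>

lemma Ck_on_const: "Ck_on k U (\<lambda>x. c)"
proof (induction k arbitrary: c)
  case (Suc k)
  then show ?case by (auto intro!: exI[of _ "\<lambda>x h. 0"])
qed simp

lemma Ck_on_bounded_linear:
  assumes "bounded_linear f"
  shows "Ck_on k U f"
proof (cases k)
  case 0
  then show ?thesis using assms by (simp add: linear_continuous_on)
next
  case (Suc m)
  then show ?thesis using assms Ck_on_const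
    by (auto intro!: exI[of _ "\<lambda>x. f"] bounded_linear_imp_has_derivative)
qed

lemma smooth_on_bounded_linear: "bounded_linear f \<Longrightarrow> smooth_on U f"
  by (simp add: smooth_on_def Ck_on_bounded_linear)

definition outer_product :: "real ^ 'k::finite \<Rightarrow> real ^ 'k ^ 'k" where
  "outer_product d = (\<chi> i j. d $ i * d $ j)"

lemma transpose_outer_product: "transpose (outer_product d) = outer_product d"
  by (simp add: vec_eq_iff transpose_def outer_product_def mult.commute)

lemma outer_product_mult_vec: "outer_product d *v g = (d \<bullet> g) *\<^sub>R d"
  by (simp add: vec_eq_iff outer_product_def matrix_vector_mult_def inner_vec_def
      sum_distrib_left mult_ac)

lemma sum_outer_products_mult_vec:
  "(\<Sum>i\<in>I. c i *\<^sub>R outer_product (d i)) *v g = (\<Sum>i\<in>I. (c i * (d i \<bullet> g)) *\<^sub>R d i)"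
  by (simp add: vec_eq_iff matrix_vector_mult_def outer_product_def inner_vec_def
      sum_distrib_left sum_distrib_right sum.swap[of _ I] mult_ac)

lemma transpose_sum_outer_products:
  "transpose (\<Sum>i\<in>I. c i *\<^sub>R outer_product (d i)) = (\<Sum>i\<in>I. c i *\<^sub>R outer_product (d i))"
  by (simp add: vec_eq_iff transpose_def outer_product_def mult.commute)

lemma sum_outer_products_nonneg:
  assumes "\<And>i. i \<in> I \<Longrightarrow> 0 \<le> c i"
  shows "0 \<le> v \<bullet> ((\<Sum>i\<in>I. c i *\<^sub>R outer_product (d i)) *v v)"
proof -
  have "0 \<le> c i * (d i \<bullet> v) * (v \<bullet> d i)" if "i \<in> I" for i
    using assms[OF that] by (simp add: inner_commute mult.assoc)
  then show ?thesis
    unfolding sum_outer_products_mult_vec inner_sum_right inner_scaleR_right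
    by (simp add: sum_nonneg)
qed

lemma card_split_block_less:
  assumes P: "partition_on X P" "finite P" "A \<in> P"
    and Q: "partition_on A Q" "Q \<noteq> {A}" "finite Q"
  shows "card P < card (P - {A} \<union> Q)"
proof -
  have "A \<noteq> {}" using P by (auto dest: partition_onD3)
  then have "Q \<noteq> {}" using Q(1) by (auto dest: partition_onD1)
  have "card Q \<noteq> 1"
  proof
    assume "card Q = 1"
    then obtain B where "Q = {B}" by (rule card_1_singletonE)
    with partition_onD1[OF Q(1)] Q(2) show False by simp
  qed
  moreover have "card Q \<noteq> 0" using \<open>Q \<noteq> {}\<close> Q(3) by simp
  ultimately have "2 \<le> card Q" by linarith
  have "(P - {A}) \<inter> Q = {}"
  proof (rule ccontr)
    assume "(P - {A}) \<inter> Q \<noteq> {}"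
    then obtain B where "B \<in> P" "B \<noteq> A" "B \<in> Q" by auto
    have "B \<inter> A = {}"
      using disjointD[OF partition_onD2[OF P(1)]] \<open>B \<in> P\<close> \<open>B \<noteq> A\<close> P(3) by blast
    moreover have "B \<subseteq> A" "B \<noteq> {}"
      using \<open>B \<in> Q\<close> partition_onD1[OF Q(1)] partition_onD3[OF Q(1)] by auto
    ultimately show False by auto
  qed
  then have "card (P - {A} \<union> Q) = card P - 1 + card Q"
    using P(2,3) Q(3) by (simp add: card_Un_disjoint)
  then show ?thesis
    using \<open>2 \<le> card Q\<close> P(2,3) card_gt_0_iff[of P] by linarith
qed

lemma splits_card_blocks_less:
  fixes \<A> \<B> :: "'a::finite partition"
  assumes "(A, Q) \<in> splits \<A> \<B>"
  shows "card (blocks \<A>) < card (blocks \<B>)"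
proof -
  from assms have "A \<in> blocks \<A>" "partition_on A Q" "Q \<noteq> {A}"
    and blocks_\<B>: "blocks \<B> = blocks \<A> - {A} \<union> Q"
    by (auto simp: splits_def)
  moreover have "partition_on UNIV (blocks \<A>)" using Rep_partition by simp
  ultimately show ?thesis
    unfolding blocks_\<B> by (intro card_split_block_less) simp_all
qed

lemma Qoff_nonneg:
  assumes "\<And>\<C>. 0 \<le> \<rho> \<C>"
  shows "0 \<le> Qoff \<rho> \<A> \<B>"
  unfolding Qoff_def rho_up_def using assms by (auto intro!: sum_nonneg)

lemma Qoff_nonzero_card_blocks_less:
  assumes "Qoff \<rho> \<A> \<B> \<noteq> 0"
  shows "card (blocks \<A>) < card (blocks \<B>)"
proof -
  from assms have "splits \<A> \<B> \<noteq> {}"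
    by (auto simp: Qoff_def split: if_splits)
  then obtain A Q where "(A, Q) \<in> splits \<A> \<B>"
    by auto
  then show ?thesis by (rule splits_card_blocks_less)
qed

text \<open>Whenever Qoff is nonzero the denominator is positive; otherwise the weight is 0, also on
  the diagonal, where the denominator vanishes and x / 0 = 0.\<close>

definition jump_weight :: "('a::finite partition \<Rightarrow> real) \<Rightarrow> 'a partition \<Rightarrow> 'a partition \<Rightarrow> real" where
  "jump_weight \<rho> \<A> \<B> = Qoff \<rho> \<A> \<B> / (real (card (blocks \<B>)) - real (card (blocks \<A>)))"

lemma jump_weight_nonneg:
  assumes "\<And>\<C>. 0 \<le> \<rho> \<C>"
  shows "0 \<le> jump_weight \<rho> \<A> \<B>"
  using Qoff_nonneg[where \<A> = \<A> and \<B> = \<B>, OF assms] Qoff_nonzero_card_blocks_less[of \<rho> \<A> \<B>]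
  unfolding jump_weight_def by (cases "Qoff \<rho> \<A> \<B> = 0") auto

lemma jump_weight_mult_card_diff:
  "jump_weight \<rho> \<A> \<B> * (real (card (blocks \<B>)) - real (card (blocks \<A>))) = Qoff \<rho> \<A> \<B>"
  using Qoff_nonzero_card_blocks_less[of \<rho> \<A> \<B>]
  unfolding jump_weight_def by (cases "Qoff \<rho> \<A> \<B> = 0") auto

definition block_count :: "real ^ 'a::finite partition" where
  "block_count = (\<chi> \<A>. real (card (blocks \<A>)))"

lemma Nfun_eq_inner: "Nfun p = block_count \<bullet> p"
  by (simp add: Nfun_def block_count_def inner_vec_def mult.commute)

lemma Nfun_gradient_eq_block_count:
  assumes "(Nfun has_derivative (\<lambda>h. g \<bullet> h)) (at p)"
  shows "g = block_count"
proof -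
  have "(Nfun has_derivative (\<lambda>h. block_count \<bullet> h)) (at p)"
    unfolding Nfun_eq_inner[abs_def] by (rule has_derivative_inner_right[OF has_derivative_ident])
  with assms have "(\<lambda>h. g \<bullet> h) = (\<lambda>h. block_count \<bullet> h)"
    by (rule has_derivative_unique)
  then show ?thesis by (simp only: fun_eq_iff vector_eq_rdot)
qed

definition onsager_matrix ::
    "('a::finite partition \<Rightarrow> real) \<Rightarrow> real ^ 'a partition \<Rightarrow> real ^ 'a partition ^ 'a partition" where
  "onsager_matrix \<rho> p =
     (\<Sum>(\<A>, \<B>)\<in>UNIV. (p $ \<A> * jump_weight \<rho> \<A> \<B>) *\<^sub>R outer_product (axis \<B> 1 - axis \<A> 1))"

lemma master_rhs_eq_sum_Qoff:
  "master_rhs \<rho> p = (\<Sum>(\<A>, \<B>)\<in>UNIV. (p $ \<A> * Qoff \<rho> \<A> \<B>) *\<^sub>R (axis \<B> 1 - axis \<A> 1))"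
  unfolding master_rhs_def sum.cartesian_product[symmetric] UNIV_Times_UNIV[symmetric]
  by (intro sum.cong refl) (auto simp: Qrate_def)

lemma onsager_matrix_mult_block_count: "onsager_matrix \<rho> p *v block_count = master_rhs \<rho> p"
proof -
  have "axis \<B> 1 \<bullet> block_count - axis \<A> 1 \<bullet> block_count
          = real (card (blocks \<B>)) - real (card (blocks \<A>))" for \<A> \<B> :: "'a partition"
    by (simp add: inner_axis' block_count_def)
  then show ?thesis
    unfolding onsager_matrix_def case_prod_unfold sum_outer_products_mult_vec master_rhs_eq_sum_Qoff
    by (simp add: inner_diff_left mult.assoc jump_weight_mult_card_diff)
qed

lemma transpose_onsager_matrix: "transpose (onsager_matrix \<rho> p) = onsager_matrix \<rho> p"
  unfolding onsager_matrix_def case_prod_unfold by (rule transpose_sum_outer_products)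

lemma onsager_matrix_nonneg:
  assumes "\<And>\<C>. 0 \<le> \<rho> \<C>" and "\<And>\<A>. 0 \<le> p $ \<A>"
  shows "0 \<le> v \<bullet> (onsager_matrix \<rho> p *v v)"
  unfolding onsager_matrix_def case_prod_unfold
  by (rule sum_outer_products_nonneg) (simp add: assms jump_weight_nonneg)

lemma bounded_linear_onsager_matrix: "bounded_linear (onsager_matrix \<rho>)"
  unfolding onsager_matrix_def case_prod_unfold
  by (intro bounded_linear_sum bounded_linear_compose[OF bounded_linear_scaleR_left]
      bounded_linear_compose[OF bounded_linear_mult_left] bounded_linear_vec_nth)

theorem corollary5p3:
  fixes \<rho> :: "'n::finite partition \<Rightarrow> real"
  assumes rho_nonneg: "\<And>\<C>. 0 \<le> \<rho> \<C>"
  shows "\<exists>K :: real ^ 'n partition \<Rightarrow> real ^ 'n partition ^ 'n partition.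
           (\<forall>p\<in>prob_simplex. transpose (K p) = K p \<and> (\<forall>v. 0 \<le> v \<bullet> (K p *v v)))
         \<and> continuous_on prob_simplex K
         \<and> (\<exists>U. open U \<and> rel_interior prob_simplex \<subseteq> U \<and> smooth_on U K)
         \<and> (\<forall>p\<in>prob_simplex. \<forall>g. (Nfun has_derivative (\<lambda>h. g \<bullet> h)) (at p)
                \<longrightarrow> master_rhs \<rho> p = K p *v g)
         \<and> (\<forall>P :: real \<Rightarrow> real ^ 'n partition.
               (\<forall>t\<ge>0. P t \<in> prob_simplex \<and>
                  (P has_vector_derivative master_rhs \<rho> (P t)) (at t within {0..}))
               \<longrightarrow> (\<forall>t\<ge>0. \<forall>g. (Nfun has_derivative (\<lambda>h. g \<bullet> h)) (at (P t))
                      \<longrightarrow> (P has_vector_derivative K (P t) *v g) (at t within {0..})))"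
proof (intro exI[of _ "onsager_matrix \<rho>"] conjI ballI allI impI)
  fix p :: "real ^ 'n partition" and v
  assume "p \<in> prob_simplex"
  then show "0 \<le> v \<bullet> (onsager_matrix \<rho> p *v v)"
    by (intro onsager_matrix_nonneg rho_nonneg) (simp add: prob_simplex_def)
next
  show "continuous_on prob_simplex (onsager_matrix \<rho>)"
    by (rule linear_continuous_on[OF bounded_linear_onsager_matrix])
next
  show "\<exists>U. open U \<and> rel_interior prob_simplex \<subseteq> U \<and> smooth_on U (onsager_matrix \<rho>)"
    by (intro exI[of _ UNIV]) (simp add: smooth_on_bounded_linear bounded_linear_onsager_matrix)
next
  fix p :: "real ^ 'n partition" and g
  assume "(Nfun has_derivative (\<lambda>h. g \<bullet> h)) (at p)"
  then have "g = block_count" by (rule Nfun_gradient_eq_block_count)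
  then show "master_rhs \<rho> p = onsager_matrix \<rho> p *v g"
    by (simp add: onsager_matrix_mult_block_count)
next
  fix P :: "real \<Rightarrow> real ^ 'n partition" and t :: real and g
  assume ode: "\<forall>t\<ge>0. P t \<in> prob_simplex \<and>
            (P has_vector_derivative master_rhs \<rho> (P t)) (at t within {0..})"
    and "0 \<le> t" and grad: "(Nfun has_derivative (\<lambda>h. g \<bullet> h)) (at (P t))"
  from grad have "g = block_count" by (rule Nfun_gradient_eq_block_count)
  with ode \<open>0 \<le> t\<close>
  show "(P has_vector_derivative onsager_matrix \<rho> (P t) *v g) (at t within {0..})"
    by (simp add: onsager_matrix_mult_block_count)
qed (rule transpose_onsager_matrix)

end
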